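(* Under Assumption A, for every $k\in[K]$, $$\Theta_k-\Theta_0=(H^\top B_k^\top\mathbf e_{i_k})^{\otimes 2}-(H^\top B_0^\top\mathbf e_{i_k})^{\otimes 2}.$$ In particular, $\mathrm{rank}(\Theta_k-\Theta_0)=1$ if $i_k$ is a source node of $\mathcal G$, and $\mathrm{rank}(\Theta_k-\Theta_0)=2$ otherwise.
   Context: Notation: $[d]=\{1,\dots,d\}$, $\mathbf e_i$ standard basis vectors, $\mathbf v^{\otimes 2}:=\mathbf v\mathbf v^\top$, $M^\dagger$ the Moore–Penrose pseudoinverse. Assumption A (model). $\mathcal G$ is a DAG on $[d]$ whose nodes are ordered so that every edge $j\to i$ has $j>i$; a source node has no parents. Contexts $k\in\{0\}\cup[K]$. For each $k$, $A_k\in\mathbb R^{d\times d}$ has zero diagonal and $(A_k)_{ij}=0$ unless $j\to i$ is an edge of $\mathcal G$, and $(A_0)_{ij}\neq 0$ iff $j\to i$ is an edge; $\Omega_k$ is diagonal with positive diagonal; $B_k:=\Omega_k^{-1/2}(I_d-A_k)$. In context $k$, $Z=B_k^{-1}\varepsilon$ with $\mathrm{Cov}(\varepsilon)=I_d$. For each $k\in[K]$ there exist $i_k\in[d]$ and $\mathbf c_k\in\mathbb R^d$ with $B_k=B_0+\mathbf e_{i_k}\mathbf c_k^\top$, and $B_k^\top\mathbf e_{i_k}$ is not a scalar multiple of $B_0^\top\mathbf e_{i_k}$ unless $i_k$ is a source. $G\in\mathbb R^{p\times d}$ ($p\ge d$) has rank $d$, $X=GZ$ in every context, $H:=G^\dagger\in\mathbb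 R^{d\times p}$, normalized so that in each row of $H$ the maximum absolute value of the entries is $1$ and the leftmost entry of absolute value $1$ equals $1$. The precision matrices are $\Theta_k:=\mathbb E[XX^\top]^\dagger=H^\top B_k^\top B_kH$. *)

theory Defs
  imports "HOL-Analysis.Analysis"
begin

definition outer2 :: "real^'n \<Rightarrow> real^'n^'n" where
  "outer2 v = (\<chi> a b. v $ a * v $ b)"

definition penrose_pinv :: "real^'d^'p \<Rightarrow> real^'p^'d \<Rightarrow> bool" where
  "penrose_pinv G H \<longleftrightarrow>
     G ** H ** G = G \<and> H ** G ** H = H \<and>
     transpose (G ** H) = G ** H \<and> transpose (H ** G) = H ** G"

definition inv_sqrt_diag :: "real^'d^'d \<Rightarrow> real^'d^'d" where
  "inv_sqrt_diag W = (\<chi> i j. if i = j then 1 / sqrt (W $ i $ i) else 0)"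

definition Bmat :: "real^'d^'d \<Rightarrow> real^'d^'d \<Rightarrow> real^'d^'d" where
  "Bmat W A = inv_sqrt_diag W ** (mat 1 - A)"

text \<open>A node is a source iff it has no parents; (j,i) \<in> E encodes the edge j \<rightarrow> i.\<close>
definition is_source :: "('d \<times> 'd) set \<Rightarrow> 'd \<Rightarrow> bool" where
  "is_source E i \<longleftrightarrow> \<not> (\<exists>j. (j, i) \<in> E)"

definition row_normalized :: "real^('p::{finite,wellorder})^'d \<Rightarrow> bool" where
  "row_normalized H \<longleftrightarrow> (\<forall>r.
     (\<forall>q. \<bar>H $ r $ q\<bar> \<le> 1) \<and> (\<exists>q. \<bar>H $ r $ q\<bar> = 1) \<and>
     H $ r $ (LEAST q. \<bar>H $ r $ q\<bar> = 1) = 1)"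

definition basis_outer :: "'d \<Rightarrow> real^'d \<Rightarrow> real^'d^'d" where
  "basis_outer i c = (\<chi> a b. if a = i then c $ b else 0)"

end

theory Submission
  imports Defs
begin

(* Intervening on node i changes only row i of B, and B^T B is the sum of the outer products
   of the rows of B; hence Theta_k - Theta_0 = H^T (B_k^T B_k - B_0^T B_0) H is x x^T - y y^T,
   where x and y are the images under H^T of the new and the old row i. H^T is injective since
   a Moore-Penrose pseudoinverse has the same rank as G. At a source both rows are distinct
   positive multiples of e_i, so the difference is a nonzero multiple of one outer product
   (rank 1). Otherwise x and y are linearly independent, and the range of x x^T - y y^T is
   then all of span {x, y} (rank 2). *)

lemma outer2_matrix_vector_mult: "outer2 x *v z = (x \<bullet> z) *\<^sub>R (x :: real^'n)"
  by (simp add: vec_eq_iff outer2_def matrix_vector_mult_def inner_vec_def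
      sum_distrib_left sum_distrib_right mult_ac)

lemma outer2_scaleR: "outer2 (a *\<^sub>R w) = a\<^sup>2 *\<^sub>R outer2 (w :: real^'n)"
  by (simp add: vec_eq_iff outer2_def power2_eq_square)

lemma exists_inner_dual:
  fixes x y :: "real^'n"
  assumes y: "y \<noteq> 0" and not_parallel: "\<And>s. x \<noteq> s *\<^sub>R y"
  obtains z where "x \<bullet> z = 1" "y \<bullet> z = 0"
proof -
  define r where "r = x - ((x \<bullet> y) / (y \<bullet> y)) *\<^sub>R y"
  have r_nonzero: "r \<noteq> 0"
  proof
    assume "r = 0"
    then have "x = ((x \<bullet> y) / (y \<bullet> y)) *\<^sub>R y" by (simp add: r_def)
    with not_parallel show False by blast
  qed
  have y_r: "y \<bullet> r = 0" using y by (simp add: r_def inner_diff_right inner_commute)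
  then have x_r: "x \<bullet> r = r \<bullet> r" by (simp add: r_def inner_diff_left)
  show thesis
    by (rule that[of "(1 / (r \<bullet> r)) *\<^sub>R r"]) (simp_all add: x_r y_r r_nonzero)
qed

lemma rank_outer2_diff_independent:
  fixes x y :: "real^'n"
  assumes y: "y \<noteq> 0" and not_parallel: "\<And>s. x \<noteq> s *\<^sub>R y"
  shows "rank (outer2 x - outer2 y) = 2"
proof -
  let ?M = "outer2 x - outer2 y"
  have M: "?M *v z = (x \<bullet> z) *\<^sub>R x - (y \<bullet> z) *\<^sub>R y" for z
    by (simp add: matrix_vector_mult_diff_rdistrib outer2_matrix_vector_mult)
  have x: "x \<noteq> 0" using not_parallel[of 0] by simp
  have y_not_parallel: "y \<noteq> s *\<^sub>R x" for s
    using not_parallel[of "1 / s"] y by (cases "s = 0") auto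
  obtain z1 z2 where "x \<bullet> z1 = 1" "y \<bullet> z1 = 0" "y \<bullet> z2 = 1" "x \<bullet> z2 = 0"
    by (metis exists_inner_dual x y not_parallel y_not_parallel)
  then have "?M *v z1 = x" "?M *v (- z2) = y" by (simp_all add: M)
  then have "{x, y} \<subseteq> range ((*v) ?M)" by (metis empty_subsetI insert_subset rangeI)
  moreover have "range ((*v) ?M) \<subseteq> span {x, y}"
    by (simp add: image_subset_iff M span_diff span_mul span_base)
  moreover have "subspace (range ((*v) ?M))"
    by (rule linear_subspace_image[OF matrix_vector_mul_linear subspace_UNIV])
  ultimately have "range ((*v) ?M) = span {x, y}"
    by (simp add: span_minimal subset_antisym)
  moreover have "independent {x, y}" "x \<noteq> y"
    using x y not_parallel[of 1] not_parallel by (auto simp: independent_insert span_singleton)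
  ultimately show ?thesis
    by (simp add: rank_dim_range dim_eq_card_independent)
qed

lemma rank_outer2_diff_image_independent:
  fixes T :: "real^'n^'m"
  assumes T: "inj ((*v) T)" and y: "y \<noteq> 0" and not_parallel: "\<And>s. x \<noteq> s *\<^sub>R y"
  shows "rank (outer2 (T *v x) - outer2 (T *v y)) = 2"
proof (rule rank_outer2_diff_independent)
  show "T *v y \<noteq> 0" using T y by (metis injD matrix_vector_mult_0_right)
  show "T *v x \<noteq> s *\<^sub>R (T *v y)" for s
    using T not_parallel by (metis injD matrix_vector_mult_scaleR)
qed

lemma scaleR_matrix_vector_mult: "(a *\<^sub>R M) *v z = a *\<^sub>R (M *v z :: real^'m)"
  by (simp add: vec_eq_iff matrix_vector_mult_def sum_distrib_left mult.assoc)

lemma rank_scaleR_outer2: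
  fixes w :: "real^'n"
  assumes w: "w \<noteq> 0" and a: "a \<noteq> 0"
  shows "rank (a *\<^sub>R outer2 w) = 1"
proof -
  let ?M = "a *\<^sub>R outer2 w"
  have M: "?M *v z = (a * (w \<bullet> z)) *\<^sub>R w" for z
    by (simp add: scaleR_matrix_vector_mult outer2_matrix_vector_mult)
  have "?M *v ((1 / (a * (w \<bullet> w))) *\<^sub>R w) = w" using w a by (simp add: M)
  then have "{w} \<subseteq> range ((*v) ?M)" by (metis empty_subsetI insert_subset rangeI)
  moreover have "range ((*v) ?M) \<subseteq> span {w}"
    by (simp add: image_subset_iff M span_mul span_base)
  moreover have "subspace (range ((*v) ?M))"
    by (rule linear_subspace_image[OF matrix_vector_mul_linear subspace_UNIV])
  ultimately have "range ((*v) ?M) = span {w}"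
    by (simp add: span_minimal subset_antisym)
  then show ?thesis using w by (simp add: rank_dim_range)
qed

lemma rank_outer2_diff_parallel:
  fixes w :: "real^'n"
  assumes "w \<noteq> 0" "\<bar>a\<bar> \<noteq> \<bar>b\<bar>"
  shows "rank (outer2 (a *\<^sub>R w) - outer2 (b *\<^sub>R w)) = 1"
proof -
  have "a\<^sup>2 - b\<^sup>2 \<noteq> 0"
    using assms(2) by (metis abs_ge_zero power2_abs power2_eq_iff_nonneg right_minus_eq)
  moreover have "outer2 (a *\<^sub>R w) - outer2 (b *\<^sub>R w) = (a\<^sup>2 - b\<^sup>2) *\<^sub>R outer2 w"
    by (simp add: outer2_scaleR scaleR_diff_left)
  ultimately show ?thesis using rank_scaleR_outer2[OF assms(1)] by simp
qed

lemma rank_outer2_diff_image_parallel: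
  fixes T :: "real^'n^'m"
  assumes "inj ((*v) T)" "w \<noteq> 0" "\<bar>a\<bar> \<noteq> \<bar>b\<bar>"
  shows "rank (outer2 (T *v (a *\<^sub>R w)) - outer2 (T *v (b *\<^sub>R w))) = 1"
proof -
  have "T *v w \<noteq> 0" using assms(1,2) by (metis injD matrix_vector_mult_0_right)
  then show ?thesis using assms(3) by (simp add: matrix_vector_mult_scaleR rank_outer2_diff_parallel)
qed

lemma matrix_diff_ldistrib: "A ** (B - C) = A ** B - A ** (C :: 'a::ring_1^'n^'m)"
  by (simp add: vec_eq_iff matrix_matrix_mult_def sum_subtractf right_diff_distrib)

lemma matrix_diff_rdistrib: "(B - C) ** A = B ** A - C ** (A :: 'a::ring_1^'n^'m)"
  by (simp add: vec_eq_iff matrix_matrix_mult_def sum_subtractf left_diff_distrib)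

lemma transpose_mult_outer2_mult:
  fixes H :: "real^'p^'d"
  shows "transpose H ** outer2 w ** H = outer2 (transpose H *v w)"
  by (simp add: vec_eq_iff matrix_matrix_mult_def transpose_def outer2_def matrix_vector_mult_def
      sum_distrib_left sum_distrib_right mult_ac sum_product)

lemma transpose_mult_axis: "transpose B *v axis i 1 = (B :: real^'n^'m) $ i"
  by (simp add: vec_eq_iff matrix_vector_mult_def transpose_def axis_def if_distrib cong: if_cong)

lemma gram_eq_sum_outer2_rows: "transpose B ** B = (\<Sum>r\<in>UNIV. outer2 ((B :: real^'n^'m) $ r))"
  by (simp add: vec_eq_iff matrix_matrix_mult_def transpose_def outer2_def)

lemma gram_diff_single_row:
  fixes B B' :: "real^'n^'m"
  assumes "\<And>r. r \<noteq> i \<Longrightarrow> B' $ r = B $ r"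
  shows "transpose B' ** B' - transpose B ** B = outer2 (B' $ i) - outer2 (B $ i)"
proof -
  have "transpose B' ** B' - transpose B ** B = (\<Sum>r\<in>UNIV. outer2 (B' $ r) - outer2 (B $ r))"
    by (simp add: gram_eq_sum_outer2_rows sum_subtractf)
  also have "\<dots> = (\<Sum>r\<in>UNIV. if r = i then outer2 (B' $ i) - outer2 (B $ i) else 0)"
    by (rule sum.cong) (auto simp: assms)
  finally show ?thesis by simp
qed

lemma sandwich_gram_diff_single_row:
  fixes H :: "real^'p^'n" and B B' :: "real^'n^'m"
  assumes "\<And>r. r \<noteq> i \<Longrightarrow> B' $ r = B $ r"
  shows "transpose H ** transpose B' ** B' ** H - transpose H ** transpose B ** B ** H
    = outer2 (transpose H *v B' $ i) - outer2 (transpose H *v B $ i)"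
proof -
  have "transpose H ** transpose B' ** B' ** H - transpose H ** transpose B ** B ** H
      = transpose H ** (transpose B' ** B' - transpose B ** B) ** H"
    by (simp add: matrix_mul_assoc matrix_diff_ldistrib matrix_diff_rdistrib)
  also have "\<dots> = transpose H ** (outer2 (B' $ i) - outer2 (B $ i)) ** H"
    by (simp only: gram_diff_single_row[OF assms])
  also have "\<dots> = transpose H ** outer2 (B' $ i) ** H - transpose H ** outer2 (B $ i) ** H"
    by (simp only: matrix_diff_ldistrib matrix_diff_rdistrib)
  finally show ?thesis by (simp only: transpose_mult_outer2_mult)
qed

lemma penrose_pinv_rank:
  assumes "penrose_pinv G H"
  shows "rank H = rank G"
proof (rule antisym)
  have "rank H = rank (H ** G ** H)" using assms by (simp add: penrose_pinv_def)
  also have "\<dots> \<le> rank G" by (metis rank_mul_le_left rank_mul_le_right order_trans)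
  finally show "rank H \<le> rank G" .
  have "rank G = rank (G ** H ** G)" using assms by (simp add: penrose_pinv_def)
  also have "\<dots> \<le> rank H" by (metis rank_mul_le_left rank_mul_le_right order_trans)
  finally show "rank G \<le> rank H" .
qed

lemma Bmat_nth: "Bmat W A $ i $ j = ((if i = j then 1 else 0) - A $ i $ j) / sqrt (W $ i $ i)"
proof -
  have "Bmat W A $ i $ j
      = (\<Sum>l\<in>UNIV. (if i = l then 1 / sqrt (W $ i $ i) else 0) * (mat 1 - A) $ l $ j)"
    by (simp add: Bmat_def inv_sqrt_diag_def matrix_matrix_mult_def)
  also have "\<dots> = (\<Sum>l\<in>UNIV. if l = i then (mat 1 - A) $ i $ j / sqrt (W $ i $ i) else 0)"
    by (rule sum.cong) auto
  finally show ?thesis by (simp add: mat_def)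
qed

lemma Bmat_diag_pos: "A $ i $ i = 0 \<Longrightarrow> 0 < W $ i $ i \<Longrightarrow> 0 < Bmat W A $ i $ i"
  by (simp add: Bmat_nth)

lemma Bmat_row_parentless:
  "(\<And>j. A $ i $ j = 0) \<Longrightarrow> Bmat W A $ i = (1 / sqrt (W $ i $ i)) *\<^sub>R axis i 1"
  by (simp add: vec_eq_iff Bmat_nth axis_def)

lemma add_basis_outer_row_other: "r \<noteq> i \<Longrightarrow> (B + basis_outer i c) $ r = B $ r"
  by (simp add: vec_eq_iff basis_outer_def)

lemma rank_outer2_diff_Bmat_rows_parentless:
  fixes T :: "real^'n^'m"
  assumes T: "inj ((*v) T)" and rows_differ: "Bmat W' A' $ i \<noteq> Bmat W A $ i"
    and "\<And>j. A' $ i $ j = 0" "\<And>j. A $ i $ j = 0" and "0 < W' $ i $ i" "0 < W $ i $ i"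
  shows "rank (outer2 (T *v Bmat W' A' $ i) - outer2 (T *v Bmat W A $ i)) = 1"
proof -
  have rows: "Bmat W' A' $ i = (1 / sqrt (W' $ i $ i)) *\<^sub>R axis i 1"
    "Bmat W A $ i = (1 / sqrt (W $ i $ i)) *\<^sub>R axis i 1"
    using assms(3,4) by (simp_all add: Bmat_row_parentless)
  then have "\<bar>1 / sqrt (W' $ i $ i)\<bar> \<noteq> \<bar>1 / sqrt (W $ i $ i)\<bar>"
    using rows_differ assms(5,6) by auto
  then show ?thesis by (simp add: rows rank_outer2_diff_image_parallel[OF T])
qed

lemma rank_outer2_diff_Bmat_row_nonparallel:
  fixes T :: "real^'n^'m"
  assumes T: "inj ((*v) T)" and "A $ i $ i = 0" "0 < W $ i $ i"
    and not_parallel: "\<And>s. u \<noteq> s *\<^sub>R Bmat W A $ i"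
  shows "rank (outer2 (T *v u) - outer2 (T *v Bmat W A $ i)) = 2"
proof (rule rank_outer2_diff_image_independent[OF T _ not_parallel])
  have "0 < Bmat W A $ i $ i" using assms(2,3) by (rule Bmat_diag_pos)
  then show "Bmat W A $ i \<noteq> 0" by (metis less_irrefl zero_index)
qed

theorem proposition1:
  fixes E :: "(('d::{finite,wellorder}) \<times> ('d::{finite,wellorder})) set"
    and K :: nat
    and A :: "nat \<Rightarrow> real^('d::{finite,wellorder})^('d::{finite,wellorder})"
    and \<Omega> :: "nat \<Rightarrow> real^('d::{finite,wellorder})^('d::{finite,wellorder})"
    and ik :: "nat \<Rightarrow> ('d::{finite,wellorder})"
    and c :: "nat \<Rightarrow> real^('d::{finite,wellorder})"
    and G :: "real^('d::{finite,wellorder})^('p::{finite,wellorder})"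
    and H :: "real^('p::{finite,wellorder})^('d::{finite,wellorder})"
  defines "B \<equiv> (\<lambda>k. Bmat (\<Omega> k) (A k))"
    and "\<Theta> \<equiv> (\<lambda>k. transpose H ** transpose (Bmat (\<Omega> k) (A k)) ** Bmat (\<Omega> k) (A k) ** H)"
  assumes topo: "\<And>j i. (j, i) \<in> E \<Longrightarrow> j > i"
    and A_diag: "\<And>k i. k \<le> K \<Longrightarrow> A k $ i $ i = 0"
    and A_supp: "\<And>k i j. k \<le> K \<Longrightarrow> (j, i) \<notin> E \<Longrightarrow> A k $ i $ j = 0"
    and A0_supp: "\<And>i j. A 0 $ i $ j \<noteq> 0 \<longleftrightarrow> (j, i) \<in> E"
    and Omega_diag: "\<And>k i j. k \<le> K \<Longrightarrow> i \<noteq> j \<Longrightarrow> \<Omega> k $ i $ j = 0"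
    and Omega_pos: "\<And>k i. k \<le> K \<Longrightarrow> \<Omega> k $ i $ i > 0"
    and interv: "\<And>k. k \<in> {1..K} \<Longrightarrow> B k = B 0 + basis_outer (ik k) (c k)"
    and nonscalar: "\<And>k. k \<in> {1..K} \<Longrightarrow> \<not> is_source E (ik k) \<Longrightarrow>
        \<not> (\<exists>s::real. transpose (B k) *v axis (ik k) 1 = s *\<^sub>R (transpose (B 0) *v axis (ik k) 1))"
    and genuine: "\<And>k. k \<in> {1..K} \<Longrightarrow> B k \<noteq> B 0"
    and p_ge_d: "CARD('d) \<le> CARD('p)"
    and G_rank: "rank G = CARD('d)"
    and H_pinv: "penrose_pinv G H"
    and H_norm: "row_normalized H"
  shows "\<forall>k \<in> {1..K}.
     \<Theta> k - \<Theta> 0 = outer2 (transpose H *v (transpose (B k) *v axis (ik k) 1))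
                   - outer2 (transpose H *v (transpose (B 0) *v axis (ik k) 1))
     \<and> rank (\<Theta> k - \<Theta> 0) = (if is_source E (ik k) then 1 else 2)"
proof -
  have inj_Ht: "inj ((*v) (transpose H))"
    using penrose_pinv_rank[OF H_pinv] G_rank by (simp add: full_rank_injective[symmetric] rank_transpose)
  have \<Theta>_B: "\<Theta> m = transpose H ** transpose (B m) ** B m ** H" for m
    by (simp add: \<Theta>_def B_def)
  show ?thesis
  proof
    fix k assume k: "k \<in> {1..K}"
    define i where "i = ik k"
    have rows: "B k $ r = B 0 $ r" if "r \<noteq> i" for r
      unfolding interv[OF k] i_def[symmetric] using that by (rule add_basis_outer_row_other)
    have diff: "\<Theta> k - \<Theta> 0 = outer2 (transpose H *v B k $ i) - outer2 (transpose H *v B 0 $ i)"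
      unfolding \<Theta>_B using rows by (rule sandwich_gram_diff_single_row)
    have "B k $ i \<noteq> B 0 $ i" using genuine[OF k] rows by (metis vec_eq_iff)
    then have source: "rank (\<Theta> k - \<Theta> 0) = 1" if "is_source E i"
      unfolding diff B_def using that k A_supp Omega_pos
      by (intro rank_outer2_diff_Bmat_rows_parentless[OF inj_Ht]) (auto simp: is_source_def)
    have nonsource: "rank (\<Theta> k - \<Theta> 0) = 2" if "\<not> is_source E i"
      unfolding diff B_def using that k nonscalar A_diag Omega_pos
      by (intro rank_outer2_diff_Bmat_row_nonparallel[OF inj_Ht])
        (auto simp: i_def B_def transpose_mult_axis simp del: transpose_matrix_vector)
    show "\<Theta> k - \<Theta> 0 = outer2 (transpose H *v (transpose (B k) *v axis (ik k) 1))
                   - outer2 (transpose H *v (transpose (B 0) *v axis (ik k) 1))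
     \<and> rank (\<Theta> k - \<Theta> 0) = (if is_source E (ik k) then 1 else 2)"
      using diff source nonsource by (simp only: transpose_mult_axis i_def) simp
  qed
qed

end
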